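(* Let $0<\lambda<1$ and $c>0$. Let $g:[0,\infty)\to[1,\infty)$, $g(x) = [1 + (1-\lambda)x]^{1/(1-\lambda)}$, and let $h(x) = \frac{W(g(x))}{\exp[c\, g(x)^{1-\lambda}]} - 1$ for $x \ge 0$. Then for every $s\in\mathbb{C}$ with $\Re(s)>0$, the Laplace transform $\mathscr{L}(s) = \int_0^\infty h(x) e^{-sx}\,dx$ equals $$\mathscr{L}(s) = \frac{c(1-\lambda)}{c(1-\lambda)+s}\,\Psi(s) - \frac1s.$$
   Context: For $x>0$ define $w(x) = \frac{c(1-\lambda)\log(x)\exp(c x^{1-\lambda})}{x^\lambda}$ and $W(x) = \sum_{p \le x} w(p)$ (sum over primes). For $\Re(s)>0$ define $\Psi(s) = \sum_p \frac{\log p}{p^\lambda \exp\left[s\,\frac{p^{1-\lambda}-1}{1-\lambda}\right]}$, the sum over all primes $p$. *)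

theory Defs
  imports "HOL-Analysis.Analysis" "HOL-Computational_Algebra.Primes"
begin

definition w :: "real \<Rightarrow> real \<Rightarrow> real \<Rightarrow> real" where
  "w c lam x = c * (1 - lam) * ln x * exp (c * x powr (1 - lam)) / x powr lam"

definition W :: "real \<Rightarrow> real \<Rightarrow> real \<Rightarrow> real" where
  "W c lam x = (\<Sum>p\<in>{p::nat. prime p \<and> real p \<le> x}. w c lam (real p))"

definition Psi :: "real \<Rightarrow> complex \<Rightarrow> complex" where
  "Psi lam s = (\<Sum>\<^sub>\<infinity>p\<in>{p::nat. prime p}.
      complex_of_real (ln (real p) / real p powr lam) /
      exp (s * complex_of_real ((real p powr (1 - lam) - 1) / (1 - lam))))"

definition g :: "real \<Rightarrow> real \<Rightarrow> real" where
  "g lam x = (1 + (1 - lam) * x) powr (1 / (1 - lam))"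

definition h :: "real \<Rightarrow> real \<Rightarrow> real \<Rightarrow> real" where
  "h c lam x = W c lam (g lam x) / exp (c * g lam x powr (1 - lam)) - 1"

end

theory Submission
  imports Defs "HOL-Real_Asymp.Real_Asymp"
begin

text \<open>
  Write \<open>a = c(1 - \<lambda>)\<close> and \<open>t(u) = (u powr (1 - \<lambda>) - 1)/(1 - \<lambda>)\<close> for the inverse of \<open>g\<close>.
  Since \<open>p \<le> g(x)\<close> iff \<open>t(p) \<le> x\<close>, and \<open>c g(x) powr (1 - \<lambda>) = c + a x\<close>, for \<open>x \<ge> 0\<close>
  \<open>(h(x) + 1) exp(-s x) = \<Sum>\<^sub>p w(p) exp(-c) [t(p) \<le> x] exp(-(a + s) x)\<close>.
  The \<open>p\<close>-th summand integrates to \<open>w(p) exp(-c) exp(-(a + s) t(p)) / (a + s)\<close>, which is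
  \<open>a/(a + s)\<close> times the \<open>p\<close>-th term of \<open>\<Psi>(s)\<close>. The integrals of the absolute values are
  \<open>a/(a + Re s)\<close> times the terms of \<open>\<Psi>(Re s)\<close>, a convergent series because \<open>exp(-s t(p))\<close>
  decays faster than any power of \<open>p\<close>; so summation and integration commute.
\<close>

lemma has_integral_exp_minus_complex:
  fixes z :: complex
  assumes z: "0 < Re z"
  shows "((\<lambda>x. exp (- z * of_real x)) has_integral exp (- z * of_real b) / z) {b..}"
proof -
  define F where "F = (\<lambda>x::real. - exp (- z * of_real x) / z)"
  define f where "f k x = (if x \<in> {b..b + real k} then exp (- z * of_real x) else 0)" for k :: nat and x
  have z0: "z \<noteq> 0"
    using z by auto
  have "((\<lambda>x. exp (- z * of_real x)) has_integral F (b + real k) - F b) {b..b + real k}" for k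
  proof (rule fundamental_theorem_of_calculus)
    fix x assume "x \<in> {b..b + real k}"
    have "((\<lambda>w. - exp (- z * w) / z) has_field_derivative exp (- z * of_real x)) (at (of_real x))"
      using z0 by (auto intro!: derivative_eq_intros)
    then show "(F has_vector_derivative exp (- z * of_real x)) (at x within {b..b + real k})"
      unfolding F_def by (rule has_vector_derivative_real_field)
  qed simp
  then have f_integral: "(f k has_integral F (b + real k) - F b) {b..}" for k
    unfolding f_def by (rule has_integral_restrict[THEN iffD2, rotated]) auto
  have "(\<lambda>k. exp (- Re z * (b + real k))) \<longlonglongrightarrow> 0"
    using z by real_asymp
  then have "(\<lambda>k. exp (- z * of_real (b + real k))) \<longlonglongrightarrow> 0"
    by (subst tendsto_norm_zero_iff[symmetric]) simp
  then have "(\<lambda>k. F (b + real k) - F b) \<longlonglongrightarrow> - 0 / z - F b"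
    unfolding F_def using z0 by (intro tendsto_intros)
  moreover have "\<forall>x\<in>{b..}. (\<lambda>k. f k x) \<longlonglongrightarrow> exp (- z * of_real x)"
  proof
    fix x :: real assume "x \<in> {b..}"
    moreover obtain N :: nat where "x - b \<le> real N"
      using real_arch_simple by blast
    ultimately have "\<forall>\<^sub>F k in sequentially. f k x = exp (- z * of_real x)"
      by (auto simp: f_def eventually_at_top_linorder intro!: exI[of _ N])
    then show "(\<lambda>k. f k x) \<longlonglongrightarrow> exp (- z * of_real x)"
      by (rule tendsto_eventually)
  qed
  ultimately show ?thesis
    using integrable_on_exp_minus_to_infinity[of "Re z" b] z
    by (intro has_integral_dominated_convergence[OF f_integral, of "\<lambda>x. exp (- Re z * x)"])
      (auto simp: F_def f_def)
qed

lemma set_integral_exp_minus_complex: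
  fixes z :: complex
  assumes z: "0 < Re z"
  shows "set_integrable lebesgue {b..} (\<lambda>x. exp (- z * of_real x))"
    and "(LINT x:{b..}|lebesgue. exp (- z * of_real x)) = exp (- z * of_real b) / z"
proof -
  note integral = has_integral_exp_minus_complex[OF z, of b]
  show integrable: "set_integrable lebesgue {b..} (\<lambda>x. exp (- z * of_real x))"
    using integral integrable_on_exp_minus_to_infinity[of "Re z" b] z
    by (intro absolutely_integrable_integrable_bound[where g = "\<lambda>x. exp (- Re z * x)"]) auto
  show "(LINT x:{b..}|lebesgue. exp (- z * of_real x)) = exp (- z * of_real b) / z"
    using set_lebesgue_integral_eq_integral(2)[OF integrable] integral_unique[OF integral] by simp
qed

lemma set_integral_exp_minus:
  fixes a :: real
  assumes a: "0 < a"
  shows "(LINT x:{b..}|lebesgue. exp (- a * x)) = exp (- a * b) / a"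
proof -
  note integral = has_integral_exp_minus_to_infinity[OF a, of b]
  have "set_integrable lebesgue {b..} (\<lambda>x. exp (- a * x))"
    using integral by (intro nonnegative_absolutely_integrable_1) auto
  then show ?thesis
    using set_lebesgue_integral_eq_integral(2) integral_unique[OF integral] by metis
qed

lemma has_integral_suminf_indicator_exp:
  fixes z :: complex and C :: "nat \<Rightarrow> complex" and t :: "nat \<Rightarrow> real"
  assumes z: "0 < Re z"
    and summable: "summable (\<lambda>n. norm (C n) * exp (- Re z * t n))"
    and support: "\<And>n. C n \<noteq> 0 \<Longrightarrow> b \<le> t n"
  shows "((\<lambda>x. \<Sum>n. C n * indicator {t n..} x * exp (- z * of_real x)) has_integral
           (\<Sum>n. C n * exp (- z * of_real (t n))) / z) {b..}"
proof -
  define F where "F n x = C n * indicator {t n..} x * exp (- z * of_real x)" for n x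
  define G where "G = (\<lambda>x. \<Sum>n. F n x)"
  have F_eq: "F n = (\<lambda>x. C n * (indicator {t n..} x *\<^sub>R exp (- z * of_real x)))" for n
    by (auto simp: F_def indicator_def)
  have F_integrable: "integrable lebesgue (F n)" for n
    using set_integral_exp_minus_complex(1)[OF z, of "t n"]
    unfolding F_eq set_integrable_def by (rule integrable_mult_right)
  have F_integral: "integral\<^sup>L lebesgue (F n) = C n * exp (- z * of_real (t n)) / z" for n
    using set_integral_exp_minus_complex(2)[OF z, of "t n"]
    unfolding F_eq integral_mult_right_zero by (simp add: set_lebesgue_integral_def)
  have norm_F: "norm (F n x) = norm (C n) * (indicator {t n..} x *\<^sub>R exp (- Re z * x))" for n x
    by (simp add: F_def norm_mult indicator_def)
  have "(\<integral>x. norm (F n x) \<partial>lebesgue) = norm (C n) * exp (- Re z * t n) / Re z" for n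
    using set_integral_exp_minus[OF z, of "t n"] by (simp add: norm_F set_lebesgue_integral_def)
  then have summable_norm_integrals: "summable (\<lambda>n. \<integral>x. norm (F n x) \<partial>lebesgue)"
    using summable_divide[OF summable] by simp
  have "norm (F n x) \<le> norm (C n) * exp (- Re z * t n)" for n x
    using z by (auto simp: norm_F indicator_def intro!: mult_left_mono)
  then have "summable (\<lambda>n. norm (F n x))" for x
    by (intro summable_comparison_test'[OF summable, where N = 0]) simp
  then have "(\<lambda>n. integral\<^sup>L lebesgue (F n)) sums integral\<^sup>L lebesgue G"
    and "integrable lebesgue G"
    using sums_integral[OF F_integrable _ summable_norm_integrals]
      integrable_suminf[OF F_integrable _ summable_norm_integrals]
    by (auto simp: G_def)
  then have "(G has_integral (\<Sum>n. C n * exp (- z * of_real (t n)) / z)) UNIV"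
    using has_integral_integral_lebesgue by (force simp: F_integral sums_iff)
  moreover have "(\<lambda>x. if x \<in> {b..} then G x else 0) = G"
  proof
    fix x show "(if x \<in> {b..} then G x else 0) = G x"
    proof (cases "x \<in> {b..}")
      case False
      have "F n x = 0" for n
        using False support[of n] by (cases "C n = 0") (auto simp: F_def indicator_def)
      then show ?thesis
        by (simp add: G_def)
    qed simp
  qed
  ultimately have "(G has_integral (\<Sum>n. C n * exp (- z * of_real (t n)) / z)) {b..}"
    using has_integral_restrict_UNIV[of "{b..}" G] by simp
  moreover have "(\<Sum>n. C n * exp (- z * of_real (t n)) / z) = (\<Sum>n. C n * exp (- z * of_real (t n))) / z"
  proof -
    have "(\<lambda>n. norm (C n * exp (- z * of_real (t n)))) = (\<lambda>n. norm (C n) * exp (- Re z * t n))"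
      by (simp add: norm_mult)
    then have "summable (\<lambda>n. C n * exp (- z * of_real (t n)))"
      using summable by (metis summable_norm_cancel)
    then show ?thesis
      by (rule suminf_divide)
  qed
  ultimately show ?thesis
    unfolding G_def F_def by argo
qed

lemma summable_ln_div_powr_mult_exp_minus_powr:
  fixes lam b r :: real
  assumes "0 < b" "0 < r"
  shows "summable (\<lambda>n::nat. ln (real n) / real n powr lam * exp (- r * ((real n powr b - 1) / b)))"
proof (rule summable_comparison_test_bigo)
  show "summable (\<lambda>n::nat. norm (1 / real n ^ 2))"
    using inverse_power_summable[of 2, where 'a = real] by (simp add: inverse_eq_divide)
  show "(\<lambda>n::nat. ln (real n) / real n powr lam * exp (- r * ((real n powr b - 1) / b)))
          \<in> O(\<lambda>n. 1 / real n ^ 2)"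
    using assms by real_asymp
qed

definition g_inv :: "real \<Rightarrow> real \<Rightarrow> real" where
  "g_inv lam u = (u powr (1 - lam) - 1) / (1 - lam)"

lemma g_powr_one_minus:
  assumes "lam < 1" "0 \<le> x"
  shows "g lam x powr (1 - lam) = 1 + (1 - lam) * x"
  using assms by (simp add: g_def powr_powr)

lemma g_inv_le_iff:
  assumes "lam < 1" "0 \<le> x" "0 \<le> u"
  shows "g_inv lam u \<le> x \<longleftrightarrow> u \<le> g lam x"
proof -
  have "g_inv lam u \<le> x \<longleftrightarrow> u powr (1 - lam) \<le> 1 + (1 - lam) * x"
    using assms by (simp add: g_inv_def field_simps)
  also have "\<dots> \<longleftrightarrow> u powr (1 - lam) \<le> g lam x powr (1 - lam)"
    using assms by (simp add: g_powr_one_minus)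
  also have "\<dots> \<longleftrightarrow> u \<le> g lam x"
    using assms powr_mono2[of "1 - lam" u "g lam x"] powr_less_mono2[of "1 - lam" "g lam x" u]
    by (force simp: g_def)
  finally show ?thesis .
qed

lemma g_inv_nonneg: "lam < 1 \<Longrightarrow> 1 \<le> u \<Longrightarrow> 0 \<le> g_inv lam u"
  by (simp add: g_inv_def ge_one_powr_ge_zero)

definition psi_term :: "real \<Rightarrow> complex \<Rightarrow> nat \<Rightarrow> complex" where
  "psi_term lam s n = (if prime n then of_real (ln (real n) / real n powr lam) /
      exp (s * of_real (g_inv lam (real n))) else 0)"

lemma norm_psi_term:
  "norm (psi_term lam s n) =
    (if prime n then ln (real n) / real n powr lam * exp (- Re s * g_inv lam (real n)) else 0)"
proof (cases "prime n")
  case True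
  then have "1 \<le> real n"
    using prime_ge_1_nat[of n] by simp
  then have "norm (psi_term lam s n) = ln (real n) / real n powr lam / exp (Re s * g_inv lam (real n))"
    using True by (simp add: psi_term_def norm_divide norm_mult)
  then show ?thesis
    using True by (simp add: exp_minus divide_inverse)
qed (simp add: psi_term_def)

lemma summable_norm_psi_term:
  assumes "lam < 1" "0 < Re s"
  shows "summable (\<lambda>n. norm (psi_term lam s n))"
proof (rule summable_comparison_test'[where N = 0])
  show "summable (\<lambda>n. ln (real n) / real n powr lam * exp (- Re s * g_inv lam (real n)))"
    unfolding g_inv_def using assms by (intro summable_ln_div_powr_mult_exp_minus_powr) auto
  show "norm (norm (psi_term lam s n))
      \<le> ln (real n) / real n powr lam * exp (- Re s * g_inv lam (real n))" for n
    by (cases n) (auto simp: norm_psi_term)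
qed

lemma psi_term_sums_Psi:
  assumes "lam < 1" "0 < Re s"
  shows "psi_term lam s sums Psi lam s"
proof -
  note summable = summable_norm_psi_term[OF assms]
  have "Psi lam s = infsum (psi_term lam s) UNIV"
    unfolding Psi_def by (rule infsum_cong_neutral) (auto simp: psi_term_def g_inv_def)
  also have "\<dots> = suminf (psi_term lam s)"
    using norm_summable_imp_has_sum[OF summable summable_sums[OF summable_norm_cancel[OF summable]]]
    by (rule infsumI)
  finally show ?thesis
    using summable_norm_cancel[OF summable] by (simp add: summable_sums)
qed

definition prime_weight :: "real \<Rightarrow> real \<Rightarrow> nat \<Rightarrow> real" where
  "prime_weight c lam n = (if prime n then w c lam (real n) * exp (- c) else 0)"

lemma prime_weight_mult_exp_g_inv:
  assumes "lam < 1"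
  shows "of_real (prime_weight c lam n) *
           exp (- (of_real (c * (1 - lam)) + s) * of_real (g_inv lam (real n)))
       = of_real (c * (1 - lam)) * psi_term lam s n"
proof (cases "prime n")
  case True
  define a where "a = c * (1 - lam)"
  define t where "t = g_inv lam (real n)"
  have "exp (c * real n powr (1 - lam)) * exp (- c) * exp (- a * t) = 1"
    using assms by (simp add: a_def t_def g_inv_def field_simps flip: exp_add)
  moreover have "w c lam (real n) * exp (- c) * exp (- a * t)
      = a * (ln (real n) / real n powr lam) * (exp (c * real n powr (1 - lam)) * exp (- c) * exp (- a * t))"
    by (simp add: w_def a_def)
  ultimately have w_exp: "w c lam (real n) * exp (- c) * exp (- a * t) = a * (ln (real n) / real n powr lam)"
    by simp
  have "- (of_real a + s) * of_real t = of_real (- a * t) - s * of_real t"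
    by (simp add: algebra_simps)
  then have "exp (- (of_real a + s) * of_real t) = of_real (exp (- a * t)) / exp (s * of_real t)"
    by (simp only: exp_diff exp_of_real)
  with w_exp True show ?thesis
    by (simp add: prime_weight_def psi_term_def flip: a_def t_def of_real_mult)
qed (simp add: prime_weight_def psi_term_def)

lemma h_mult_exp_eq_suminf_diff:
  fixes s :: complex
  assumes lam: "lam < 1" and x: "0 \<le> x"
  shows "of_real (h c lam x) * exp (- s * of_real x) =
    (\<Sum>n. of_real (prime_weight c lam n) * indicator {g_inv lam (real n)..} x *
      exp (- (of_real (c * (1 - lam)) + s) * of_real x)) - exp (- s * of_real x)"
proof -
  define P where "P = {p::nat. prime p \<and> real p \<le> g lam x}"
  define z where "z = of_real (c * (1 - lam)) + s"
  have "P \<subseteq> {..nat \<lceil>g lam x\<rceil>}"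
    by (auto simp: P_def nat_le_iff) linarith
  then have "finite P"
    using finite_subset by blast
  have weight: "of_real (prime_weight c lam n) * indicator {g_inv lam (real n)..} x
      = (if n \<in> P then of_real (w c lam (real n) * exp (- c)) else (0 :: complex))" for n
    using g_inv_le_iff[OF lam x, of "real n"] by (auto simp: prime_weight_def P_def indicator_def)
  have "exp (- c) * exp (- (c * (1 - lam)) * x) = 1 / exp (c * g lam x powr (1 - lam))"
    using lam x by (simp add: g_powr_one_minus divide_inverse algebra_simps flip: exp_add exp_minus)
  then have W_exp: "W c lam (g lam x) * exp (- c) * exp (- (c * (1 - lam)) * x) = h c lam x + 1"
    by (simp add: h_def mult.assoc)
  have "(\<Sum>n. of_real (prime_weight c lam n) * indicator {g_inv lam (real n)..} x * exp (- z * of_real x))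
      = (\<Sum>n\<in>P. of_real (w c lam (real n) * exp (- c)) * exp (- z * of_real x))"
    using \<open>finite P\<close> by (subst suminf_finite[of P]) (auto simp: weight)
  also have "\<dots> = of_real (W c lam (g lam x) * exp (- c)) * exp (- z * of_real x)"
    by (simp add: W_def P_def sum_distrib_right)
  also have "\<dots> = of_real (W c lam (g lam x) * exp (- c) * exp (- (c * (1 - lam)) * x)) * exp (- s * of_real x)"
  proof -
    have "exp (- z * of_real x) = of_real (exp (- (c * (1 - lam)) * x)) * exp (- s * of_real x)"
      by (simp add: z_def algebra_simps flip: exp_add exp_of_real)
    then show ?thesis
      by (simp only: of_real_mult mult.assoc)
  qed
  finally have "(\<Sum>n. of_real (prime_weight c lam n) * indicator {g_inv lam (real n)..} x * exp (- z * of_real x))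
      = of_real (h c lam x + 1) * exp (- s * of_real x)"
    by (simp only: W_exp)
  then show ?thesis
    unfolding z_def by (simp add: distrib_right)
qed

lemma has_integral_prime_weight_series:
  fixes s :: complex
  assumes "lam < 1" "0 < c" "0 < Re s"
  defines "a \<equiv> c * (1 - lam)"
  shows "((\<lambda>x. \<Sum>n. of_real (prime_weight c lam n) * indicator {g_inv lam (real n)..} x *
            exp (- (of_real a + s) * of_real x))
          has_integral of_real a / (of_real a + s) * Psi lam s) {0..}"
proof -
  define z where "z = of_real a + s"
  define C :: "nat \<Rightarrow> complex" where "C n = of_real (prime_weight c lam n)" for n
  have "0 < a"
    using assms by (simp add: a_def)
  then have z: "0 < Re z"
    using \<open>0 < Re s\<close> by (simp add: z_def)
  have C_exp: "C n * exp (- z * of_real (g_inv lam (real n))) = of_real a * psi_term lam s n" for n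
    using prime_weight_mult_exp_g_inv[OF \<open>lam < 1\<close>] by (simp add: C_def z_def a_def)
  have "norm (C n) * exp (- Re z * g_inv lam (real n)) = a * norm (psi_term lam s n)" for n
    using arg_cong[OF C_exp[of n], of norm] \<open>0 < a\<close> by (simp add: norm_mult)
  then have "summable (\<lambda>n. norm (C n) * exp (- Re z * g_inv lam (real n)))"
    using summable_mult[OF summable_norm_psi_term[OF \<open>lam < 1\<close> \<open>0 < Re s\<close>], of a] by simp
  moreover have "C n \<noteq> 0 \<Longrightarrow> 0 \<le> g_inv lam (real n)" for n
    using g_inv_nonneg[OF \<open>lam < 1\<close>, of "real n"] prime_ge_1_nat[of n]
    by (auto simp: C_def prime_weight_def split: if_splits)
  ultimately have "((\<lambda>x. \<Sum>n. C n * indicator {g_inv lam (real n)..} x * exp (- z * of_real x))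
      has_integral (\<Sum>n. C n * exp (- z * of_real (g_inv lam (real n)))) / z) {0..}"
    by (rule has_integral_suminf_indicator_exp[OF z])
  moreover have "(\<Sum>n. C n * exp (- z * of_real (g_inv lam (real n)))) = of_real a * Psi lam s"
    unfolding C_exp using psi_term_sums_Psi[OF \<open>lam < 1\<close> \<open>0 < Re s\<close>]
    by (intro sums_unique[symmetric] sums_mult)
  ultimately show ?thesis
    unfolding C_def z_def by (simp only: times_divide_eq_left)
qed

theorem mainTheorem10:
  fixes c lam :: real and s :: complex
  assumes "0 < lam" "lam < 1" "0 < c" "0 < Re s"
  shows "((\<lambda>x. complex_of_real (h c lam x) * exp (- s * complex_of_real x)) has_integral
          (complex_of_real (c * (1 - lam)) / (complex_of_real (c * (1 - lam)) + s) * Psi lam s - 1 / s))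
         {0..}"
proof -
  have "((\<lambda>x. exp (- s * of_real x)) has_integral 1 / s) {0..}"
    using has_integral_exp_minus_complex[OF \<open>0 < Re s\<close>, of 0] by simp
  with has_integral_prime_weight_series[OF \<open>lam < 1\<close> \<open>0 < c\<close> \<open>0 < Re s\<close>]
  show ?thesis
    by (rule has_integral_eq[rotated, OF has_integral_diff])
      (rule h_mult_exp_eq_suminf_diff[OF \<open>lam < 1\<close>, symmetric], simp)
qed

end
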